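(* Let $d\in\mathbb N$ and let $\mathcal K$ be a Fraïssé class. Assume that the class of structures in $\mathcal K$ whose Ramsey degree for embeddings in $\mathcal K$ is at most $d$ is cofinal in $\mathcal K$. Then $|M(G_\mathcal K)|\le d$.
   Context: For structures $A,B$, $B^A$ is the set of embeddings of $A$ into $B$; $A\le B$ means $B^A\ne\emptyset$. A class $\mathcal D$ is cofinal in $\mathcal K$ if for every $A\in\mathcal K$ there is $B\in\mathcal D$ with $A\le B$. A Fraïssé class is a class of finite structures that is hereditary, has joint embedding and amalgamation, and contains arbitrarily large finite structures; $\mathrm{Flim}(\mathcal K)$ is its Fraïssé limit, $G_\mathcal K=\mathrm{Aut}(\mathrm{Flim}(\mathcal K))$ with pointwise convergence topology, and $M(G)$ is the universal minimal $G$-flow (flows are continuous actions on compact Hausdorff spaces). $C\hookrightarrow(B)^A_{k,d}$ means: for every $\chi:C^A\to\{0,\dots,k-1\}$ there is $b\in C^B$ with $|\chi(\{b\circ a:a\in B^A\})|\le d$; the Ramsey degree for embeddings of $A$ in $\mathcal K$ is the least $d$ such that for all $B\in\mathcal K$, $k\ge2$ there is $C\in\mathcal K$ with $C\hookrightarrow(B)^A_{k,d}$ ($\infty$ if none). *)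

theory Defs
  imports "HOL-Analysis.Analysis" "HOL-Library.Extended_Nat"
begin

text \<open>A signature: arities of relation symbols (type 'r) and function symbols (type 'f).
Structures carry a universe, an interpretation of relation symbols and of function symbols.\<close>

type_synonym ('r,'f) signature = "('r \<Rightarrow> nat) \<times> ('f \<Rightarrow> nat)"

record ('a,'r,'f) struct =
  univ :: "'a set"
  rel  :: "'r \<Rightarrow> 'a list \<Rightarrow> bool"
  fns  :: "'f \<Rightarrow> 'a list \<Rightarrow> 'a"

definition closed_in_struct ::
  "('r,'f) signature \<Rightarrow> ('a,'r,'f) struct \<Rightarrow> 'a set \<Rightarrow> bool" where
  "closed_in_struct sig A T \<longleftrightarrow> T \<subseteq> univ A \<and>
     (\<forall>F xs. set xs \<subseteq> T \<and> length xs = snd sig F \<longrightarrow> fns A F xs \<in> T)"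

definition wf_struct :: "('r,'f) signature \<Rightarrow> ('a,'r,'f) struct \<Rightarrow> bool" where
  "wf_struct sig A \<longleftrightarrow> closed_in_struct sig A (univ A)"

definition emb ::
  "('r,'f) signature \<Rightarrow> ('a,'r,'f) struct \<Rightarrow> ('b,'r,'f) struct \<Rightarrow> ('a \<Rightarrow> 'b) set" where
  "emb sig A B = {h \<in> univ A \<rightarrow>\<^sub>E univ B.
      inj_on h (univ A) \<and>
      (\<forall>R xs. set xs \<subseteq> univ A \<and> length xs = fst sig R \<longrightarrow>
                (rel B R (map h xs) \<longleftrightarrow> rel A R xs)) \<and>
      (\<forall>F xs. set xs \<subseteq> univ A \<and> length xs = snd sig F \<longrightarrow>
                h (fns A F xs) = fns B F (map h xs))}"

definition embeds :: "('r,'f) signature \<Rightarrow> ('a,'r,'f) struct \<Rightarrow> ('b,'r,'f) struct \<Rightarrow> bool" where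
  "embeds sig A B \<longleftrightarrow> emb sig A B \<noteq> {}"

text \<open>Classes of structures are represented by structures on universes contained in nat
(every finite or countable structure is isomorphic to one of these); hereditarity
includes closure under isomorphic copies.\<close>

definition fraisse_class ::
  "('r,'f) signature \<Rightarrow> (nat,'r,'f) struct set \<Rightarrow> bool" where
  "fraisse_class sig K \<longleftrightarrow>
     (\<forall>A\<in>K. wf_struct sig A \<and> finite (univ A)) \<and>
     (\<forall>A\<in>K. \<forall>B. wf_struct sig B \<and> finite (univ B) \<and> embeds sig B A \<longrightarrow> B \<in> K) \<and>
     (\<forall>A\<in>K. \<forall>B\<in>K. \<exists>C\<in>K. embeds sig A C \<and> embeds sig B C) \<and>
     (\<forall>A\<in>K. \<forall>B\<in>K. \<forall>C\<in>K. \<forall>f\<in>emb sig A B. \<forall>g\<in>emb sig A C.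
        \<exists>D\<in>K. \<exists>r\<in>emb sig B D. \<exists>s\<in>emb sig C D. \<forall>x\<in>univ A. r (f x) = s (g x)) \<and>
     (\<forall>n. \<exists>A\<in>K. n \<le> card (univ A))"

definition substruct :: "('a,'r,'f) struct \<Rightarrow> 'a set \<Rightarrow> ('a,'r,'f) struct" where
  "substruct A T = A\<lparr>univ := T\<rparr>"

definition Aut :: "('r,'f) signature \<Rightarrow> ('a,'r,'f) struct \<Rightarrow> ('a \<Rightarrow> 'a) set" where
  "Aut sig L = {g \<in> emb sig L L. g ` univ L = univ L}"

text \<open>L is a Fraisse limit of K: a countable (universe within nat) structure, locally finite,
whose age (finite structures embeddable in L) is K, and which is ultrahomogeneous.\<close>
definition is_fraisse_limit ::
  "('r,'f) signature \<Rightarrow> (nat,'r,'f) struct set \<Rightarrow> (nat,'r,'f) struct \<Rightarrow> bool" where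
  "is_fraisse_limit sig K L \<longleftrightarrow>
     wf_struct sig L \<and>
     (\<forall>S. S \<subseteq> univ L \<and> finite S \<longrightarrow>
        (\<exists>T. S \<subseteq> T \<and> finite T \<and> closed_in_struct sig L T)) \<and>
     (\<forall>A. wf_struct sig A \<and> finite (univ A) \<longrightarrow> (A \<in> K \<longleftrightarrow> embeds sig A L)) \<and>
     (\<forall>T1 T2 h. finite T1 \<and> closed_in_struct sig L T1 \<and> finite T2 \<and> closed_in_struct sig L T2
        \<and> h \<in> emb sig (substruct L T1) (substruct L T2) \<and> h ` T1 = T2 \<longrightarrow>
        (\<exists>g\<in>Aut sig L. \<forall>x\<in>T1. g x = h x))"

definition arrows ::
  "('r,'f) signature \<Rightarrow> (nat,'r,'f) struct \<Rightarrow> (nat,'r,'f) struct \<Rightarrow> (nat,'r,'f) struct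
     \<Rightarrow> nat \<Rightarrow> nat \<Rightarrow> bool" where
  "arrows sig C B A k d \<longleftrightarrow>
     (\<forall>col \<in> (emb sig A C \<rightarrow> {..<k}). \<exists>b\<in>emb sig B C.
        card (col ` {compose (univ A) b a | a. a \<in> emb sig A B}) \<le> d)"

definition ramsey_prop ::
  "('r,'f) signature \<Rightarrow> (nat,'r,'f) struct set \<Rightarrow> (nat,'r,'f) struct \<Rightarrow> nat \<Rightarrow> bool" where
  "ramsey_prop sig K A d \<longleftrightarrow>
     (\<forall>B\<in>K. \<forall>k\<ge>2. \<exists>C\<in>K. arrows sig C B A k d)"

definition ramsey_degree ::
  "('r,'f) signature \<Rightarrow> (nat,'r,'f) struct set \<Rightarrow> (nat,'r,'f) struct \<Rightarrow> enat" where
  "ramsey_degree sig K A =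
     (if \<exists>d. ramsey_prop sig K A d then enat (LEAST d. ramsey_prop sig K A d) else \<infinity>)"

definition pointwise_top :: "(nat \<Rightarrow> nat) set \<Rightarrow> (nat \<Rightarrow> nat) topology" where
  "pointwise_top G = subtopology (product_topology (\<lambda>_. discrete_topology UNIV) UNIV) G"

text \<open>G is a group of permutations of the set U (group operation: composition restricted to U,
identity: restrict id U). A G-flow is a continuous action on a compact Hausdorff space.\<close>
definition is_flow ::
  "nat set \<Rightarrow> (nat \<Rightarrow> nat) set \<Rightarrow> 'x topology \<Rightarrow> ((nat \<Rightarrow> nat) \<Rightarrow> 'x \<Rightarrow> 'x) \<Rightarrow> bool" where
  "is_flow U G X act \<longleftrightarrow>
     compact_space X \<and> Hausdorff_space X \<and>
     (\<forall>g\<in>G. \<forall>x\<in>topspace X. act g x \<in> topspace X) \<and>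
     (\<forall>x\<in>topspace X. act (restrict id U) x = x) \<and>
     (\<forall>g\<in>G. \<forall>h\<in>G. \<forall>x\<in>topspace X. act (compose U g h) x = act g (act h x)) \<and>
     continuous_map (prod_topology (pointwise_top G) X) X (\<lambda>(g,x). act g x)"

definition minimal_flow ::
  "nat set \<Rightarrow> (nat \<Rightarrow> nat) set \<Rightarrow> 'x topology \<Rightarrow> ((nat \<Rightarrow> nat) \<Rightarrow> 'x \<Rightarrow> 'x) \<Rightarrow> bool" where
  "minimal_flow U G X act \<longleftrightarrow> is_flow U G X act \<and> topspace X \<noteq> {} \<and>
     (\<forall>Y. closedin X Y \<and> Y \<noteq> {} \<and> (\<forall>g\<in>G. \<forall>y\<in>Y. act g y \<in> Y) \<longrightarrow> Y = topspace X)"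

definition flow_hom ::
  "(nat \<Rightarrow> nat) set \<Rightarrow> 'x topology \<Rightarrow> ((nat \<Rightarrow> nat) \<Rightarrow> 'x \<Rightarrow> 'x)
     \<Rightarrow> 'y topology \<Rightarrow> ((nat \<Rightarrow> nat) \<Rightarrow> 'y \<Rightarrow> 'y) \<Rightarrow> ('x \<Rightarrow> 'y) \<Rightarrow> bool" where
  "flow_hom G X act Y act' \<phi> \<longleftrightarrow> continuous_map X Y \<phi> \<and>
     (\<forall>g\<in>G. \<forall>x\<in>topspace X. \<phi> (act g x) = act' g (\<phi> x))"

text \<open>Universal minimal flow: a minimal flow mapping onto every minimal flow
(universality is quantified over flows whose underlying type is the same as that of X).\<close>
definition universal_minimal_flow ::
  "nat set \<Rightarrow> (nat \<Rightarrow> nat) set \<Rightarrow> 'x topology \<Rightarrow> ((nat \<Rightarrow> nat) \<Rightarrow> 'x \<Rightarrow> 'x) \<Rightarrow> bool" where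
  "universal_minimal_flow U G X act \<longleftrightarrow> minimal_flow U G X act \<and>
     (\<forall>(Y :: 'x topology) act'. minimal_flow U G Y act' \<longrightarrow>
        (\<exists>\<phi>. flow_hom G X act Y act' \<phi> \<and> \<phi> ` topspace X = topspace Y))"

end

theory Submission
  imports Defs
begin

text \<open>
  Let L be the Fraisse limit of K and G = Aut(L).  We show that every minimal G-flow X
  (in particular the universal one) has at most d points.  Suppose x_0, ..., x_{n-1} are
  distinct points of X.  Continuity of the action and the Hausdorff property give open sets
  W_i (neighbourhoods of x_i) and finite sets S_i of L such that every automorphism fixing
  S_i pointwise moves W_i off every W_j with j ~= i; minimality makes every W_i syndetic,
  i.e. finitely many translates of W_i cover X.  Choose, by cofinality, B0 in K of Ramsey
  degree at most d with a copy alpha of B0 in L covering all S_i.  Fixing a point y of X,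
  colour a copy beta of B0 in L by i if some automorphism carrying beta onto alpha moves y
  into W_i; the separation property makes this colour unique, and syndeticity yields a
  finite B in K such that every copy of B in L contains copies of B0 of every colour
  i < n.  The Ramsey property of B0 then forces n <= d.
\<close>

section \<open>Embeddings\<close>

lemma emb_memD:
  assumes "h \<in> emb sig A B"
  shows "h \<in> univ A \<rightarrow>\<^sub>E univ B" "inj_on h (univ A)"
    "\<And>R xs. set xs \<subseteq> univ A \<Longrightarrow> length xs = fst sig R \<Longrightarrow> rel B R (map h xs) \<longleftrightarrow> rel A R xs"
    "\<And>F xs. set xs \<subseteq> univ A \<Longrightarrow> length xs = snd sig F \<Longrightarrow> h (fns A F xs) = fns B F (map h xs)"
  using assms unfolding emb_def by auto

lemma emb_into: "h \<in> emb sig A B \<Longrightarrow> x \<in> univ A \<Longrightarrow> h x \<in> univ B"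
  using emb_memD(1) by blast

lemma wf_fns:
  assumes "wf_struct sig A" "set xs \<subseteq> univ A" "length xs = snd sig F"
  shows "fns A F xs \<in> univ A"
  using assms unfolding wf_struct_def closed_in_struct_def by auto

lemma map_restrict[simp]: "set xs \<subseteq> S \<Longrightarrow> map (restrict f S) xs = map f xs"
  by (induct xs) auto

lemma emb_compose:
  assumes f: "f \<in> emb sig A B" and g: "g \<in> emb sig B C" and wf: "wf_struct sig A"
  shows "compose (univ A) g f \<in> emb sig A C"
proof -
  note fD = emb_memD[OF f] and gD = emb_memD[OF g]
  have fB: "\<And>x. x \<in> univ A \<Longrightarrow> f x \<in> univ B" using emb_into[OF f] .
  have mp: "\<And>xs. set xs \<subseteq> univ A \<Longrightarrow> map (compose (univ A) g f) xs = map (g \<circ> f) xs"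
    by (simp add: compose_def comp_def)
  have sB: "\<And>xs. set xs \<subseteq> univ A \<Longrightarrow> set (map f xs) \<subseteq> univ B" using fB by auto
  show ?thesis unfolding emb_def
  proof (intro CollectI conjI allI impI)
    show "compose (univ A) g f \<in> univ A \<rightarrow>\<^sub>E univ C"
      using fB emb_into[OF g] by (auto simp: compose_def)
    show "inj_on (compose (univ A) g f) (univ A)"
      using fD(2) gD(2) fB unfolding inj_on_def by (auto simp: compose_eq)
  next
    fix R xs assume a: "set xs \<subseteq> univ A \<and> length xs = fst sig R"
    have "rel C R (map (compose (univ A) g f) xs) = rel C R (map g (map f xs))"
      unfolding mp[OF conjunct1[OF a]] by simp
    also have "\<dots> = rel B R (map f xs)" using gD(3)[OF sB] a by simp
    also have "\<dots> = rel A R xs" using fD(3) a by simp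
    finally show "rel C R (map (compose (univ A) g f) xs) = rel A R xs" .
  next
    fix F xs assume a: "set xs \<subseteq> univ A \<and> length xs = snd sig F"
    then show "compose (univ A) g f (fns A F xs) = fns C F (map (compose (univ A) g f) xs)"
      unfolding mp[OF conjunct1[OF a]]
      using wf_fns[OF wf] gD(4)[OF sB, of xs F] fD(4)[of xs F] by (auto simp: compose_eq)
  qed
qed

lemma emb_substruct_iff:
  assumes "T \<subseteq> univ L"
  shows "h \<in> emb sig A (substruct L T) \<longleftrightarrow> h \<in> emb sig A L \<and> h ` univ A \<subseteq> T"
  using assms unfolding emb_def substruct_def by (auto simp: PiE_iff)

lemma substruct_simps[simp]:
  "univ (substruct L T) = T" "rel (substruct L T) = rel L" "fns (substruct L T) = fns L"
  unfolding substruct_def by simp_all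

lemma substruct_wf:
  assumes "closed_in_struct sig L T" shows "wf_struct sig (substruct L T)"
  using assms unfolding wf_struct_def closed_in_struct_def substruct_def by auto

lemma id_emb_substruct:
  assumes "closed_in_struct sig L T" shows "restrict id T \<in> emb sig (substruct L T) L"
  using assms unfolding emb_def substruct_def closed_in_struct_def by (auto simp: inj_on_def)

lemma list_in_image: "set xs \<subseteq> h ` S \<Longrightarrow> \<exists>ys. xs = map h ys \<and> set ys \<subseteq> S"
proof (induct xs)
  case (Cons x xs)
  then obtain ys where "xs = map h ys" "set ys \<subseteq> S" by auto
  moreover obtain y where "y \<in> S" "x = h y" using Cons.prems by auto
  ultimately show ?case by (intro exI[of _ "y # ys"]) auto
qed simp

lemma emb_image_closed:
  assumes h: "h \<in> emb sig A L" and wf: "wf_struct sig A"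
  shows "closed_in_struct sig L (h ` univ A)"
  unfolding closed_in_struct_def
proof (intro conjI allI impI)
  show "h ` univ A \<subseteq> univ L" using emb_into[OF h] by auto
next
  fix F xs assume a: "set xs \<subseteq> h ` univ A \<and> length xs = snd sig F"
  then obtain ys where ys: "xs = map h ys" "set ys \<subseteq> univ A"
    using list_in_image by blast
  have "length ys = snd sig F" using a ys by simp
  then show "fns L F xs \<in> h ` univ A"
    using emb_memD(4)[OF h ys(2)] wf_fns[OF wf ys(2)] ys(1) by (metis imageI)
qed

lemma emb_inv:
  assumes b: "b \<in> emb sig A B" and wf: "wf_struct sig A"
  shows "restrict (inv_into (univ A) b) (b ` univ A) \<in> emb sig (substruct B (b ` univ A)) A"
proof -
  note bD = emb_memD[OF b]
  let ?i = "restrict (inv_into (univ A) b) (b ` univ A)"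
  have mp: "map b (map ?i xs) = xs \<and> set (map ?i xs) \<subseteq> univ A" if "set xs \<subseteq> b ` univ A" for xs
    using that by (induct xs) (auto simp: f_inv_into_f inv_into_into)
  show ?thesis unfolding emb_def substruct_simps
  proof (intro CollectI conjI allI impI)
    show "?i \<in> b ` univ A \<rightarrow>\<^sub>E univ A" by (auto simp: inv_into_into)
    show "inj_on ?i (b ` univ A)"
      unfolding inj_on_def by (auto simp: inv_into_f_f[OF bD(2)])
  next
    fix R xs assume a: "set xs \<subseteq> b ` univ A \<and> length xs = fst sig R"
    then show "rel A R (map ?i xs) = rel B R xs"
      using mp[of xs] bD(3)[of "map ?i xs" R] by auto
  next
    fix F xs assume a: "set xs \<subseteq> b ` univ A \<and> length xs = snd sig F"
    let ?ys = "map ?i xs"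
    have ys: "map b ?ys = xs" "set ?ys \<subseteq> univ A" using mp a by auto
    have fy: "fns A F ?ys \<in> univ A" using wf_fns[OF wf ys(2)] a by simp
    have e: "b (fns A F ?ys) = fns B F xs" using bD(4)[OF ys(2)] a ys(1) by simp
    show "?i (fns B F xs) = fns A F ?ys"
      using fy unfolding e[symmetric] by (simp add: inv_into_f_f[OF bD(2)])
  qed
qed

section \<open>Automorphisms\<close>

definition perm_inv :: "nat set \<Rightarrow> (nat \<Rightarrow> nat) \<Rightarrow> nat \<Rightarrow> nat" where
  "perm_inv U g = restrict (inv_into U g) U"

lemma aut_memD: "g \<in> Aut sig L \<Longrightarrow> g \<in> emb sig L L \<and> g ` univ L = univ L"
  unfolding Aut_def by auto

lemma aut_maps: "g \<in> Aut sig L \<Longrightarrow> x \<in> univ L \<Longrightarrow> g x \<in> univ L"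
  using aut_memD by blast

lemma aut_ext: "g \<in> Aut sig L \<Longrightarrow> x \<notin> univ L \<Longrightarrow> g x = undefined"
  using aut_memD[of g sig L] unfolding emb_def by (auto simp: PiE_iff extensional_def)

lemma aut_inj: "g \<in> Aut sig L \<Longrightarrow> inj_on g (univ L)"
  using aut_memD emb_memD(2) by blast

lemma aut_id:
  assumes wf: "wf_struct sig L" shows "restrict id (univ L) \<in> Aut sig L"
  using id_emb_substruct[of sig L "univ L"] wf unfolding Aut_def wf_struct_def substruct_def by auto

lemma aut_compose:
  assumes wf: "wf_struct sig L" and g: "g \<in> Aut sig L" and h: "h \<in> Aut sig L"
  shows "compose (univ L) g h \<in> Aut sig L"
proof -
  have "compose (univ L) g h \<in> emb sig L L"
    using emb_compose[of h sig L L g L] aut_memD[OF g] aut_memD[OF h] wf by auto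
  moreover have "compose (univ L) g h ` univ L = univ L"
    using surj_compose aut_memD[OF g] aut_memD[OF h] by blast
  ultimately show ?thesis unfolding Aut_def by auto
qed

lemma aut_perm_inv:
  assumes wf: "wf_struct sig L" and g: "g \<in> Aut sig L"
  shows "perm_inv (univ L) g \<in> Aut sig L"
proof -
  note gD = aut_memD[OF g]
  have "perm_inv (univ L) g \<in> emb sig L L"
    using emb_inv[OF conjunct1[OF gD] wf] gD unfolding perm_inv_def substruct_def by simp
  moreover have "perm_inv (univ L) g ` univ L = univ L"
    using gD aut_inj[OF g] unfolding perm_inv_def
    by (metis bij_betw_def bij_betw_inv_into image_restrict_eq)
  ultimately show ?thesis unfolding Aut_def by auto
qed

lemma perm_inv_left: "g \<in> Aut sig L \<Longrightarrow> x \<in> univ L \<Longrightarrow> perm_inv (univ L) g (g x) = x"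
  unfolding perm_inv_def by (simp add: aut_maps aut_inj inv_into_f_f)

lemma perm_inv_right: "g \<in> Aut sig L \<Longrightarrow> x \<in> univ L \<Longrightarrow> g (perm_inv (univ L) g x) = x"
  unfolding perm_inv_def by (metis aut_memD f_inv_into_f restrict_apply')

lemma perm_inv_maps: "g \<in> Aut sig L \<Longrightarrow> x \<in> univ L \<Longrightarrow> perm_inv (univ L) g x \<in> univ L"
  unfolding perm_inv_def by (metis aut_memD inv_into_into restrict_apply')

lemma fraisse_class_wf:
  assumes "fraisse_class sig K" "A \<in> K" shows "wf_struct sig A" "finite (univ A)"
proof -
  have "\<forall>A\<in>K. wf_struct sig A \<and> finite (univ A)"
    using assms(1) unfolding fraisse_class_def by (rule conjunct1)
  then show "wf_struct sig A" "finite (univ A)" using assms(2) by blast+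
qed

lemma fraisse_limit_wf: "is_fraisse_limit sig K L \<Longrightarrow> wf_struct sig L"
  unfolding is_fraisse_limit_def by (rule conjunct1)

lemma fraisse_limit_age:
  assumes "is_fraisse_limit sig K L" "wf_struct sig A" "finite (univ A)"
  shows "A \<in> K \<longleftrightarrow> embeds sig A L"
proof -
  have "\<forall>A. wf_struct sig A \<and> finite (univ A) \<longrightarrow> (A \<in> K \<longleftrightarrow> embeds sig A L)"
    using assms(1) unfolding is_fraisse_limit_def by (elim conjE)
  then show ?thesis using assms(2,3) by blast
qed

lemma fraisse_limit_locally_finite:
  assumes "is_fraisse_limit sig K L" "S \<subseteq> univ L" "finite S"
  obtains T where "S \<subseteq> T" "finite T" "closed_in_struct sig L T"
proof -
  have "\<forall>S. S \<subseteq> univ L \<and> finite S \<longrightarrow> (\<exists>T. S \<subseteq> T \<and> finite T \<and> closed_in_struct sig L T)"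
    using assms(1) unfolding is_fraisse_limit_def by (elim conjE)
  then show thesis using assms(2,3) that by blast
qed

lemma fraisse_limit_emb:
  assumes "fraisse_class sig K" "is_fraisse_limit sig K L" "A \<in> K"
  obtains a where "a \<in> emb sig A L"
  using fraisse_limit_age[OF assms(2) fraisse_class_wf[OF assms(1,3)]] assms(3) that
  unfolding embeds_def by blast

lemma closed_substruct_in_class:
  assumes FL: "is_fraisse_limit sig K L" and c: "closed_in_struct sig L T" and f: "finite T"
  shows "substruct L T \<in> K"
proof -
  have "embeds sig (substruct L T) L"
    using id_emb_substruct[OF c] unfolding embeds_def by blast
  then show ?thesis using fraisse_limit_age[OF FL substruct_wf[OF c]] f by simp
qed

lemma fraisse_limit_homogeneous:
  assumes FL: "is_fraisse_limit sig K L" and wf: "wf_struct sig A" and fin: "finite (univ A)"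
    and a: "a \<in> emb sig A L" and b: "b \<in> emb sig A L"
  obtains h where "h \<in> Aut sig L" "\<And>t. t \<in> univ A \<Longrightarrow> h (b t) = a t"
proof -
  let ?T1 = "b ` univ A" and ?T2 = "a ` univ A"
  let ?ib = "restrict (inv_into (univ A) b) ?T1"
  let ?\<phi> = "compose ?T1 a ?ib"
  have c1: "closed_in_struct sig L ?T1" and c2: "closed_in_struct sig L ?T2"
    using emb_image_closed[OF b wf] emb_image_closed[OF a wf] by auto
  have \<phi>b: "?\<phi> (b t) = a t" if "t \<in> univ A" for t
    using that emb_memD(2)[OF b] by (simp add: compose_eq inv_into_f_f)
  have im: "?\<phi> ` ?T1 = ?T2"
    unfolding image_image using \<phi>b by (intro image_cong) auto
  have "?\<phi> \<in> emb sig (substruct L ?T1) L"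
    using emb_compose[OF emb_inv[OF b wf] a substruct_wf[OF c1]] by simp
  moreover have "?T2 \<subseteq> univ L" using c2 unfolding closed_in_struct_def by blast
  ultimately have \<phi>: "?\<phi> \<in> emb sig (substruct L ?T1) (substruct L ?T2)"
    using emb_substruct_iff[of ?T2 L ?\<phi> sig "substruct L ?T1"] im by simp
  have hom: "\<forall>T1 T2 h. finite T1 \<and> closed_in_struct sig L T1 \<and> finite T2 \<and> closed_in_struct sig L T2
      \<and> h \<in> emb sig (substruct L T1) (substruct L T2) \<and> h ` T1 = T2 \<longrightarrow>
      (\<exists>g\<in>Aut sig L. \<forall>x\<in>T1. g x = h x)"
    using FL unfolding is_fraisse_limit_def by (elim conjE)
  have "finite ?T1" "finite ?T2" using fin by auto
  then obtain h where h: "h \<in> Aut sig L" "\<forall>x\<in>?T1. h x = ?\<phi> x"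
    using hom[rule_format, of ?T1 ?T2 ?\<phi>] c1 c2 \<phi> im by blast
  show thesis using that[OF h(1)] h(2) \<phi>b by simp
qed

lemma ramsey_degree_prop:
  assumes "ramsey_degree sig K B \<le> enat d" shows "ramsey_prop sig K B d"
proof -
  have ex: "\<exists>d. ramsey_prop sig K B d"
    using assms unfolding ramsey_degree_def by (auto split: if_splits)
  let ?m = "LEAST d. ramsey_prop sig K B d"
  have "ramsey_prop sig K B ?m" using ex by (metis LeastI)
  moreover have "?m \<le> d" using assms ex unfolding ramsey_degree_def by simp
  ultimately show ?thesis unfolding ramsey_prop_def arrows_def by (meson order_trans)
qed

lemma cofinal_ramsey_copy:
  assumes FC: "fraisse_class sig K" and FL: "is_fraisse_limit sig K L"
    and cof: "\<forall>A\<in>K. \<exists>B\<in>K. ramsey_degree sig K B \<le> enat d \<and> embeds sig A B"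
    and S: "S \<subseteq> univ L" "finite S"
  obtains B0 \<alpha> where "B0 \<in> K" "ramsey_prop sig K B0 d" "\<alpha> \<in> emb sig B0 L" "S \<subseteq> \<alpha> ` univ B0"
proof -
  obtain T where T: "S \<subseteq> T" "finite T" "closed_in_struct sig L T"
    using fraisse_limit_locally_finite[OF FL S] .
  let ?A = "substruct L T"
  have AK: "?A \<in> K" using closed_substruct_in_class[OF FL T(3,2)] .
  then obtain B0 f where B0: "B0 \<in> K" "ramsey_degree sig K B0 \<le> enat d" and f: "f \<in> emb sig ?A B0"
    using cof unfolding embeds_def by blast
  obtain e where e: "e \<in> emb sig B0 L" using fraisse_limit_emb[OF FC FL B0(1)] .
  have wfA: "wf_struct sig ?A" using substruct_wf[OF T(3)] .
  have finA: "finite (univ ?A)" using T(2) by simp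
  obtain h where h: "h \<in> Aut sig L"
      "\<And>t. t \<in> univ ?A \<Longrightarrow> h (compose (univ ?A) e f t) = restrict id T t"
    using fraisse_limit_homogeneous[OF FL wfA finA id_emb_substruct[OF T(3)] emb_compose[OF f e wfA]]
    by blast
  let ?\<alpha> = "compose (univ B0) h e"
  have \<alpha>: "?\<alpha> \<in> emb sig B0 L"
    using emb_compose[OF e _ fraisse_class_wf(1)[OF FC B0(1)]] aut_memD[OF h(1)] by blast
  have "t = ?\<alpha> (f t)" if "t \<in> T" for t
    using h(2)[of t] that emb_into[OF f, of t] by (simp add: compose_eq)
  then have "T \<subseteq> ?\<alpha> ` univ B0" using emb_into[OF f] by force
  then show thesis using that B0(1) ramsey_degree_prop[OF B0(2)] \<alpha> T(1) by blast
qed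

section \<open>Flows of the automorphism group\<close>

lemma topspace_pointwise_top[simp]: "topspace (pointwise_top G) = G"
  unfolding pointwise_top_def by (simp add: PiE_UNIV_domain)

lemma flow_mem: "is_flow U G X act \<Longrightarrow> g \<in> G \<Longrightarrow> x \<in> topspace X \<Longrightarrow> act g x \<in> topspace X"
  unfolding is_flow_def by blast

lemma flow_id: "is_flow U G X act \<Longrightarrow> x \<in> topspace X \<Longrightarrow> act (restrict id U) x = x"
  unfolding is_flow_def by blast

lemma flow_compose: "is_flow U G X act \<Longrightarrow> g \<in> G \<Longrightarrow> h \<in> G \<Longrightarrow> x \<in> topspace X \<Longrightarrow>
   act (compose U g h) x = act g (act h x)"
  unfolding is_flow_def by blast

lemma flow_act_continuous:
  assumes fl: "is_flow U G X act" and g: "g \<in> G"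
  shows "continuous_map X X (act g)"
proof -
  have c: "continuous_map (prod_topology (pointwise_top G) X) X (\<lambda>(g,x). act g x)"
    using fl unfolding is_flow_def by blast
  have "continuous_map X (prod_topology (pointwise_top G) X) (\<lambda>x. (g, x))"
    using g by (intro continuous_map_pairedI) auto
  from continuous_map_compose[OF this c] show ?thesis by (simp add: o_def)
qed

lemma Hausdorff_finite_separation:
  assumes H: "Hausdorff_space X" and Y: "finite Y" "Y \<subseteq> topspace X"
  obtains V where "\<And>y. y \<in> Y \<Longrightarrow> openin X (V y) \<and> y \<in> V y"
    "\<And>y z. y \<in> Y \<Longrightarrow> z \<in> Y \<Longrightarrow> y \<noteq> z \<Longrightarrow> disjnt (V y) (V z)"
proof -
  define p where "p y z = (SOME AB. openin X (fst AB) \<and> openin X (snd AB) \<and>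
      y \<in> fst AB \<and> z \<in> snd AB \<and> disjnt (fst AB) (snd AB))" for y z
  have p: "openin X (fst (p y z)) \<and> openin X (snd (p y z)) \<and> y \<in> fst (p y z) \<and> z \<in> snd (p y z)
      \<and> disjnt (fst (p y z)) (snd (p y z))" if yz: "y \<in> Y" "z \<in> Y" "y \<noteq> z" for y z
  proof -
    have "y \<in> topspace X" "z \<in> topspace X" using Y(2) yz by auto
    then obtain A B where "openin X A" "openin X B" "y \<in> A" "z \<in> B" "disjnt A B"
      using H[unfolded Hausdorff_space_def, rule_format, of y z] yz(3) by blast
    then have "\<exists>AB. openin X (fst AB) \<and> openin X (snd AB) \<and>
        y \<in> fst AB \<and> z \<in> snd AB \<and> disjnt (fst AB) (snd AB)"
      by (intro exI[of _ "(A, B)"]) simp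
    from someI_ex[OF this] show ?thesis unfolding p_def .
  qed
  define V where "V y = (\<Inter>z \<in> Y - {y}. fst (p y z) \<inter> snd (p z y)) \<inter> topspace X" for y
  show thesis
  proof
    fix y assume y: "y \<in> Y"
    show "openin X (V y) \<and> y \<in> V y"
      unfolding V_def using p y Y by (intro conjI openin_INT) auto
  next
    fix y z assume "y \<in> Y" "z \<in> Y" "y \<noteq> z"
    then have "V y \<subseteq> fst (p y z)" "V z \<subseteq> snd (p y z)" "disjnt (fst (p y z)) (snd (p y z))"
      using p unfolding V_def by auto
    then show "disjnt (V y) (V z)" by (meson disjnt_subset1 disjnt_subset2)
  qed
qed

text \<open>Continuity of the action at the identity: for a neighbourhood V of x there are a
  finite set S of L and a neighbourhood U' of x such that every automorphism fixing S
  pointwise maps U' into V.\<close>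

lemma flow_stabilizer_nbhd:
  assumes fl: "is_flow (univ L) (Aut sig L) X act" and wf: "wf_struct sig L"
    and V: "openin X V" and xV: "x \<in> V"
  obtains S U' where "finite S" "S \<subseteq> univ L" "openin X U'" "x \<in> U'"
    "\<And>g. g \<in> Aut sig L \<Longrightarrow> (\<forall>s\<in>S. g s = s) \<Longrightarrow> act g ` U' \<subseteq> V"
proof -
  let ?G = "Aut sig L" and ?e = "restrict id (univ L)"
  have x: "x \<in> topspace X" using V xV openin_subset by blast
  have c: "continuous_map (prod_topology (pointwise_top ?G) X) X (\<lambda>(g,x). act g x)"
    using fl unfolding is_flow_def by blast
  let ?P = "{p \<in> topspace (prod_topology (pointwise_top ?G) X). (\<lambda>(g,x). act g x) p \<in> V}"
  have P: "openin (prod_topology (pointwise_top ?G) X) ?P"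
    using openin_continuous_map_preimage[OF c V] .
  have eP: "(?e, x) \<in> ?P" using aut_id[OF wf] x flow_id[OF fl x] xV by simp
  obtain W U' where W: "openin (pointwise_top ?G) W" "openin X U'" "?e \<in> W" "x \<in> U'"
    "W \<times> U' \<subseteq> ?P"
    using openin_prod_topology_alt[THEN iffD1, rule_format, OF P eP] by blast
  obtain Op where Op: "openin (product_topology (\<lambda>_. discrete_topology (UNIV::nat set)) UNIV) Op"
    "W = Op \<inter> ?G"
    using W(1) unfolding pointwise_top_def openin_subtopology by blast
  moreover have "?e \<in> Op" using W(3) Op(2) by blast
  ultimately obtain Xs where Xs: "?e \<in> (\<Pi>\<^sub>E i\<in>UNIV. Xs i)"
    "finite {i. Xs i \<noteq> topspace (discrete_topology UNIV)}" "(\<Pi>\<^sub>E i\<in>UNIV. Xs i) \<subseteq> Op"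
    by (blast dest: product_topology_open_contains_basis)
  define S where "S = {i. Xs i \<noteq> UNIV} \<inter> univ L"
  show thesis
  proof
    show "finite S" "S \<subseteq> univ L" unfolding S_def using Xs(2) by auto
    show "openin X U'" "x \<in> U'" by fact+
    fix g assume g: "g \<in> ?G" and gS: "\<forall>s\<in>S. g s = s"
    have "g i \<in> Xs i" for i
    proof (cases "Xs i = UNIV")
      case False
      then have "g i = ?e i" using gS aut_ext[OF g, of i] unfolding S_def by (cases "i \<in> univ L") auto
      then show ?thesis using Xs(1) by (simp add: PiE_iff)
    qed simp
    then have "g \<in> W" using Xs(3) Op(2) g by (auto simp: PiE_iff)
    then show "act g ` U' \<subseteq> V" using W(5) by auto
  qed
qed

definition syndetic ::
  "(nat \<Rightarrow> nat) set \<Rightarrow> 'x topology \<Rightarrow> ((nat \<Rightarrow> nat) \<Rightarrow> 'x \<Rightarrow> 'x) \<Rightarrow> 'x set \<Rightarrow> bool" where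
  "syndetic G X act W \<longleftrightarrow> (\<exists>F. finite F \<and> F \<subseteq> G \<and> (\<forall>z\<in>topspace X. \<exists>g\<in>F. act g z \<in> W))"

text \<open>In a minimal flow every nonempty open set is syndetic: the points never moved into W
  form a closed invariant proper subset, hence are absent, and compactness gives finitely
  many translates.\<close>

lemma minimal_flow_open_syndetic:
  assumes mf: "minimal_flow (univ L) (Aut sig L) X act" and wf: "wf_struct sig L"
    and Wo: "openin X W" and xW: "x \<in> W"
  shows "syndetic (Aut sig L) X act W"
proof -
  let ?G = "Aut sig L"
  have fl: "is_flow (univ L) ?G X act" using mf unfolding minimal_flow_def by blast
  define Q where "Q g = {z \<in> topspace X. act g z \<in> W}" for g
  have Qo: "\<And>g. g \<in> ?G \<Longrightarrow> openin X (Q g)"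
    unfolding Q_def by (rule openin_continuous_map_preimage[OF flow_act_continuous[OF fl] Wo])
  let ?Y = "topspace X - (\<Union>g\<in>?G. Q g)"
  have x: "x \<in> topspace X" using Wo xW openin_subset by blast
  have "x \<in> Q (restrict id (univ L))" using flow_id[OF fl x] x xW unfolding Q_def by simp
  then have xY: "x \<notin> ?Y" using aut_id[OF wf] by blast
  have inv: "\<forall>g\<in>?G. \<forall>y\<in>?Y. act g y \<in> ?Y"
  proof (intro ballI)
    fix g y assume g: "g \<in> ?G" and y: "y \<in> ?Y"
    have "act g y \<notin> Q h" if h: "h \<in> ?G" for h
    proof
      assume "act g y \<in> Q h"
      then have "act (compose (univ L) h g) y \<in> W"
        using flow_compose[OF fl h g, of y] y unfolding Q_def by simp
      then show False using aut_compose[OF wf h g] y unfolding Q_def by blast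
    qed
    then show "act g y \<in> ?Y" using flow_mem[OF fl g] y by blast
  qed
  have min: "\<forall>Y. closedin X Y \<and> Y \<noteq> {} \<and> (\<forall>g\<in>?G. \<forall>y\<in>Y. act g y \<in> Y) \<longrightarrow> Y = topspace X"
    using mf unfolding minimal_flow_def by (elim conjE)
  have "closedin X ?Y" using Qo by (intro closedin_diff) auto
  then have "?Y = {}" using min inv xY x by blast
  then have cov: "(\<forall>U\<in>Q ` ?G. openin X U) \<and> topspace X \<subseteq> \<Union>(Q ` ?G)" using Qo by blast
  have "compact_space X" using fl unfolding is_flow_def by blast
  then have "\<exists>\<F>. finite \<F> \<and> \<F> \<subseteq> Q ` ?G \<and> topspace X \<subseteq> \<Union>\<F>"
    unfolding compact_space_alt using cov by blast
  then obtain \<F> where F: "finite \<F>" "\<F> \<subseteq> Q ` ?G" "topspace X \<subseteq> \<Union>\<F>" by blast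
  obtain F where F': "F \<subseteq> ?G" "finite F" "\<F> = Q ` F"
    using finite_subset_image[OF F(1,2)] by blast
  have "\<forall>z\<in>topspace X. \<exists>g\<in>F. act g z \<in> W"
    using F(3) unfolding F'(3) Q_def by blast
  then show ?thesis unfolding syndetic_def using F'(1,2) by blast
qed

definition separates ::
  "(nat \<Rightarrow> nat) set \<Rightarrow> ((nat \<Rightarrow> nat) \<Rightarrow> 'x \<Rightarrow> 'x) \<Rightarrow> nat set \<Rightarrow> 'x set \<Rightarrow> 'x set \<Rightarrow> bool" where
  "separates G act S W W' \<longleftrightarrow> (\<forall>g\<in>G. (\<forall>s\<in>S. g s = s) \<longrightarrow> (\<forall>z\<in>W. act g z \<notin> W'))"

lemma minimal_flow_separated_family:
  assumes mf: "minimal_flow (univ L) (Aut sig L) X act" and wf: "wf_struct sig L"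
    and Y: "finite Y" "Y \<subseteq> topspace X"
  obtains S W where
    "\<And>i. i < card Y \<Longrightarrow> finite (S i) \<and> S i \<subseteq> univ L \<and> syndetic (Aut sig L) X act (W i)"
    "\<And>i j. i < card Y \<Longrightarrow> j < card Y \<Longrightarrow> i \<noteq> j \<Longrightarrow> separates (Aut sig L) act (S i) (W i) (W j)"
proof -
  let ?n = "card Y" and ?G = "Aut sig L"
  have fl: "is_flow (univ L) ?G X act" using mf unfolding minimal_flow_def by blast
  have H: "Hausdorff_space X" using fl unfolding is_flow_def by blast
  obtain x where x: "bij_betw x {..<?n} Y"
    using ex_bij_betw_nat_finite[OF Y(1)] by (auto simp: atLeast0LessThan)
  obtain V where V: "\<And>y. y \<in> Y \<Longrightarrow> openin X (V y) \<and> y \<in> V y"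
    "\<And>y z. y \<in> Y \<Longrightarrow> z \<in> Y \<Longrightarrow> y \<noteq> z \<Longrightarrow> disjnt (V y) (V z)"
    using Hausdorff_finite_separation[OF H Y] by blast
  let ?P = "\<lambda>i SW. finite (fst SW) \<and> fst SW \<subseteq> univ L \<and> openin X (snd SW) \<and> x i \<in> snd SW
      \<and> (\<forall>g\<in>?G. (\<forall>s\<in>fst SW. g s = s) \<longrightarrow> act g ` snd SW \<subseteq> V (x i))"
  have ex: "\<exists>SW. ?P i SW" if i: "i < ?n" for i
  proof -
    have "x i \<in> Y" using x i bij_betwE by blast
    then have Vx: "openin X (V (x i))" "x i \<in> V (x i)" using V(1) by auto
    obtain S U' where "finite S" "S \<subseteq> univ L" "openin X U'" "x i \<in> U'"
      "\<And>g. g \<in> ?G \<Longrightarrow> (\<forall>s\<in>S. g s = s) \<Longrightarrow> act g ` U' \<subseteq> V (x i)"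
      using flow_stabilizer_nbhd[OF fl wf Vx] by blast
    then show ?thesis by (intro exI[of _ "(S, U')"]) simp
  qed
  define SW where "SW i = (SOME SW. ?P i SW)" for i
  have SW: "?P i (SW i)" if "i < ?n" for i
    unfolding SW_def using someI_ex[OF ex[OF that]] .
  have WV: "snd (SW i) \<subseteq> V (x i)" if i: "i < ?n" for i
  proof
    fix z assume z: "z \<in> snd (SW i)"
    have "z \<in> topspace X" using SW[OF i] z openin_subset by blast
    then have "z = act (restrict id (univ L)) z" using flow_id[OF fl] by simp
    also have "\<dots> \<in> V (x i)"
    proof -
      have "\<forall>s\<in>fst (SW i). restrict id (univ L) s = s" using SW[OF i] by auto
      then show ?thesis using SW[OF i] aut_id[OF wf] z by blast
    qed
    finally show "z \<in> V (x i)" .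
  qed
  show thesis
  proof (rule that)
    fix i assume i: "i < ?n"
    show "finite (fst (SW i)) \<and> fst (SW i) \<subseteq> univ L \<and> syndetic ?G X act (snd (SW i))"
    proof -
      have Wi: "openin X (snd (SW i))" "x i \<in> snd (SW i)" using SW[OF i] by auto
      show ?thesis using SW[OF i] minimal_flow_open_syndetic[OF mf wf Wi] by simp
    qed
  next
    fix i j assume ij: "i < ?n" "j < ?n" "i \<noteq> j"
    then have "x i \<in> Y" "x j \<in> Y" "x i \<noteq> x j"
      using x unfolding bij_betw_def inj_on_def by auto
    then have disj: "disjnt (V (x i)) (V (x j))" using V(2) by blast
    show "separates ?G act (fst (SW i)) (snd (SW i)) (snd (SW j))"
      unfolding separates_def
    proof (intro ballI impI)
      fix g z assume "g \<in> ?G" "\<forall>s\<in>fst (SW i). g s = s" "z \<in> snd (SW i)"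
      then have "act g z \<in> act g ` snd (SW i)" "act g ` snd (SW i) \<subseteq> V (x i)"
        using SW[OF ij(1)] by auto
      then have "act g z \<in> V (x i)" by blast
      then show "act g z \<notin> snd (SW j)" using disj WV[OF ij(2)] by (auto simp: disjnt_iff)
    qed
  qed
qed

section \<open>The colouring argument\<close>

definition colour_class ::
  "('r,'f) signature \<Rightarrow> (nat,'r,'f) struct \<Rightarrow> ((nat \<Rightarrow> nat) \<Rightarrow> 'x \<Rightarrow> 'x) \<Rightarrow> 'x \<Rightarrow> nat set
     \<Rightarrow> (nat \<Rightarrow> nat) \<Rightarrow> 'x set \<Rightarrow> (nat \<Rightarrow> nat) \<Rightarrow> bool" where
  "colour_class sig L act y D \<alpha> W \<beta> \<longleftrightarrow>
     (\<exists>h\<in>Aut sig L. (\<forall>t\<in>D. h (\<beta> t) = \<alpha> t) \<and> act h y \<in> W)"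

text \<open>Colour classes of separated sets are disjoint, provided the separating set S lies in the
  image of alpha: two automorphisms carrying beta onto alpha differ by an automorphism fixing
  alpha, hence S, pointwise.\<close>

lemma colour_class_disjoint:
  assumes wf: "wf_struct sig L" and fl: "is_flow (univ L) (Aut sig L) X act"
    and y: "y \<in> topspace X" and S: "S \<subseteq> \<alpha> ` D"
    and \<alpha>: "\<alpha> ` D \<subseteq> univ L" and \<beta>: "\<beta> ` D \<subseteq> univ L"
    and sep: "separates (Aut sig L) act S W W'"
    and c1: "colour_class sig L act y D \<alpha> W \<beta>" and c2: "colour_class sig L act y D \<alpha> W' \<beta>"
  shows False
proof -
  let ?U = "univ L" and ?G = "Aut sig L"
  obtain g1 where g1: "g1 \<in> ?G" "\<And>t. t \<in> D \<Longrightarrow> g1 (\<beta> t) = \<alpha> t" "act g1 y \<in> W"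
    using c1 unfolding colour_class_def by blast
  obtain g2 where g2: "g2 \<in> ?G" "\<And>t. t \<in> D \<Longrightarrow> g2 (\<beta> t) = \<alpha> t" "act g2 y \<in> W'"
    using c2 unfolding colour_class_def by blast
  define v where "v = compose ?U g2 (perm_inv ?U g1)"
  have v: "v \<in> ?G" unfolding v_def using aut_compose[OF wf g2(1) aut_perm_inv[OF wf g1(1)]] .
  have "v s = s" if s: "s \<in> S" for s
  proof -
    obtain t where t: "t \<in> D" "s = \<alpha> t" using S s by blast
    then have "perm_inv ?U g1 s = \<beta> t" using perm_inv_left[OF g1(1)] g1(2) \<beta> by force
    then show ?thesis unfolding v_def using t \<alpha> g2(2) by (auto simp: compose_eq)
  qed
  then have "act v (act g1 y) \<notin> W'" using sep v g1(3) unfolding separates_def by blast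
  moreover have "compose ?U v g1 = g2"
  proof
    fix z show "compose ?U v g1 z = g2 z"
    proof (cases "z \<in> ?U")
      case True
      then show ?thesis unfolding v_def
        using aut_maps[OF g1(1) True] perm_inv_left[OF g1(1) True] by (simp add: compose_eq)
    next
      case False
      then show ?thesis using aut_ext[OF g2(1) False] by (simp add: compose_def)
    qed
  qed
  moreover have "act (compose ?U v g1) y = act v (act g1 y)" using flow_compose[OF fl v g1(1) y] .
  ultimately show False using g2(3) by simp
qed

text \<open>Syndeticity puts every colour into every copy of a large enough finite substructure
  B = L|T of the limit: if T contains the preimages of alpha under the finitely many
  automorphisms g in F, then any copy e of B in L contains a copy of the colour of W.\<close>

lemma colour_class_in_copy:
  assumes FL: "is_fraisse_limit sig K L" and fl: "is_flow (univ L) (Aut sig L) X act"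
    and y: "y \<in> topspace X" and \<alpha>: "\<alpha> \<in> emb sig B0 L" and wfB0: "wf_struct sig B0"
    and F: "F \<subseteq> Aut sig L" "\<forall>z\<in>topspace X. \<exists>g\<in>F. act g z \<in> W"
    and T: "finite T" "closed_in_struct sig L T"
      "\<And>g t. g \<in> F \<Longrightarrow> t \<in> univ B0 \<Longrightarrow> perm_inv (univ L) g (\<alpha> t) \<in> T"
    and e: "e \<in> emb sig (substruct L T) L"
  shows "\<exists>a\<in>emb sig B0 (substruct L T). colour_class sig L act y (univ B0) \<alpha> W (compose (univ B0) e a)"
proof -
  let ?U = "univ L" and ?G = "Aut sig L"
  have wf: "wf_struct sig L" using fraisse_limit_wf[OF FL] .
  have TU: "T \<subseteq> ?U" using T(2) unfolding closed_in_struct_def by blast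
  have fin: "finite (univ (substruct L T))" using T(1) by simp
  obtain h0 where h0: "h0 \<in> ?G" "\<And>w. w \<in> univ (substruct L T) \<Longrightarrow> h0 (restrict id T w) = e w"
    using fraisse_limit_homogeneous[OF FL substruct_wf[OF T(2)] fin e id_emb_substruct[OF T(2)]]
    by blast
  let ?h0' = "perm_inv ?U h0"
  have h0': "?h0' \<in> ?G" using aut_perm_inv[OF wf h0(1)] .
  have "act ?h0' y \<in> topspace X" using flow_mem[OF fl h0' y] .
  then obtain g where g: "g \<in> F" "act g (act ?h0' y) \<in> W" using F(2) by blast
  have gG: "g \<in> ?G" using g(1) F(1) by blast
  let ?a = "compose (univ B0) (perm_inv ?U g) \<alpha>"
  have "?a \<in> emb sig B0 L"
    using emb_compose[OF \<alpha> _ wfB0] aut_memD[OF aut_perm_inv[OF wf gG]] by blast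
  moreover have aT: "?a t \<in> T" if "t \<in> univ B0" for t
    using T(3)[OF g(1) that] that by (simp add: compose_eq)
  ultimately have a: "?a \<in> emb sig B0 (substruct L T)"
    using emb_substruct_iff[OF TU] by blast
  have "colour_class sig L act y (univ B0) \<alpha> W (compose (univ B0) e ?a)"
    unfolding colour_class_def
  proof (intro bexI conjI ballI)
    show "compose ?U g ?h0' \<in> ?G" using aut_compose[OF wf gG h0'] .
    show "act (compose ?U g ?h0') y \<in> W" using flow_compose[OF fl gG h0' y] g(2) by simp
    fix t assume t: "t \<in> univ B0"
    have "e (?a t) = h0 (?a t)" using h0(2)[of "?a t"] aT[OF t] by simp
    moreover have "?a t \<in> ?U" using aT[OF t] TU by blast
    ultimately have "?h0' (e (?a t)) = ?a t" using perm_inv_left[OF h0(1)] by simp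
    moreover have "g (?a t) = \<alpha> t"
      using perm_inv_right[OF gG emb_into[OF \<alpha> t]] t by (simp add: compose_eq)
    moreover have "e (?a t) \<in> ?U" using emb_into[OF e] aT[OF t] by simp
    ultimately show "compose ?U g ?h0' (compose (univ B0) e ?a t) = \<alpha> t"
      using t by (simp add: compose_eq)
  qed
  then show ?thesis using a by blast
qed

text \<open>If C
  arrows B with Suc n colours and degree d (the extra colour collects the uncoloured copies),
  then n <= d.\<close>

lemma arrows_colour_classes:
  fixes P :: "nat \<Rightarrow> (nat \<Rightarrow> nat) \<Rightarrow> bool"
  assumes wfB0: "wf_struct sig B0" and wfB: "wf_struct sig B"
    and c: "c \<in> emb sig C L" and arr: "arrows sig C B B0 (Suc n) d"
    and uniq: "\<And>i j \<beta>. i < n \<Longrightarrow> j < n \<Longrightarrow> \<beta> ` univ B0 \<subseteq> univ L \<Longrightarrow> P i \<beta> \<Longrightarrow> P j \<beta> \<Longrightarrow> i = j"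
    and every: "\<And>e i. e \<in> emb sig B L \<Longrightarrow> i < n \<Longrightarrow> \<exists>a\<in>emb sig B0 B. P i (compose (univ B0) e a)"
  shows "n \<le> d"
proof -
  define colour where "colour \<beta> = (if \<exists>i<n. P i \<beta> then LEAST i. i < n \<and> P i \<beta> else n)" for \<beta>
  have colour_bound: "colour \<beta> < Suc n" for \<beta>
  proof (cases "\<exists>i<n. P i \<beta>")
    case True
    then obtain i where "i < n" "P i \<beta>" by blast
    then have "(LEAST i. i < n \<and> P i \<beta>) \<le> i" by (intro Least_le) simp
    then show ?thesis unfolding colour_def using True \<open>i < n\<close> by simp
  qed (auto simp: colour_def)
  have colour_eq: "colour \<beta> = i" if "i < n" "P i \<beta>" "\<beta> ` univ B0 \<subseteq> univ L" for i \<beta>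
  proof -
    have "(LEAST i. i < n \<and> P i \<beta>) = i"
    proof (rule Least_equality)
      show "i < n \<and> P i \<beta>" using that by blast
      show "i \<le> j" if "j < n \<and> P j \<beta>" for j
        using uniq[of i j \<beta>] \<open>i < n\<close> \<open>P i \<beta>\<close> \<open>\<beta> ` univ B0 \<subseteq> univ L\<close> that by simp
    qed
    then show ?thesis unfolding colour_def using that by auto
  qed
  define col where "col = restrict (\<lambda>a. colour (compose (univ B0) c a)) (emb sig B0 C)"
  have col_fun: "col \<in> emb sig B0 C \<rightarrow> {..<Suc n}" unfolding col_def using colour_bound by auto
  then obtain b where b: "b \<in> emb sig B C"
    "card (col ` {compose (univ B0) b a | a. a \<in> emb sig B0 B}) \<le> d"
    using arr unfolding arrows_def by blast
  let ?SS = "{compose (univ B0) b a | a. a \<in> emb sig B0 B}"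
  have SS: "?SS \<subseteq> emb sig B0 C" using emb_compose[OF _ b(1) wfB0] by blast
  have cb: "compose (univ B) c b \<in> emb sig B L" using emb_compose[OF b(1) c wfB] .
  have "{..<n} \<subseteq> col ` ?SS"
  proof
    fix i assume "i \<in> {..<n}"
    then have "\<exists>a\<in>emb sig B0 B. P i (compose (univ B0) (compose (univ B) c b) a)"
      using every[OF cb] by blast
    then obtain a where a: "a \<in> emb sig B0 B" "P i (compose (univ B0) (compose (univ B) c b) a)"
      by blast
    let ?s = "compose (univ B0) b a"
    have s: "?s \<in> emb sig B0 C" using emb_compose[OF a(1) b(1) wfB0] .
    have "a \<in> univ B0 \<rightarrow> univ B" using emb_memD(1)[OF a(1)] by blast
    then have eq: "compose (univ B0) c ?s = compose (univ B0) (compose (univ B) c b) a"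
      by (rule compose_assoc)
    have "compose (univ B0) c ?s ` univ B0 \<subseteq> univ L"
      using emb_into[OF emb_compose[OF s c wfB0]] by blast
    then have "colour (compose (univ B0) c ?s) = i"
      using colour_eq[of i, OF _ a(2)] \<open>i \<in> {..<n}\<close> unfolding eq by blast
    then have "col ?s = i" unfolding col_def using s by simp
    then show "i \<in> col ` ?SS" using a(1) by blast
  qed
  moreover have "finite (col ` ?SS)"
  proof (rule finite_subset)
    show "col ` ?SS \<subseteq> {..<Suc n}" using funcset_image[OF col_fun] SS by blast
  qed simp
  ultimately have "card {..<n} \<le> card (col ` ?SS)" using card_mono by blast
  then show ?thesis using b(2) by simp
qed

lemma separated_family_bound:
  assumes FC: "fraisse_class sig K" and FL: "is_fraisse_limit sig K L"
    and cof: "\<forall>A\<in>K. \<exists>B\<in>K. ramsey_degree sig K B \<le> enat d \<and> embeds sig A B"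
    and fl: "is_flow (univ L) (Aut sig L) X act" and y: "y \<in> topspace X"
    and fam: "\<And>i. i < n \<Longrightarrow> finite (S i) \<and> S i \<subseteq> univ L \<and> syndetic (Aut sig L) X act (W i)"
    and sep: "\<And>i j. i < n \<Longrightarrow> j < n \<Longrightarrow> i \<noteq> j \<Longrightarrow> separates (Aut sig L) act (S i) (W i) (W j)"
  shows "n \<le> d"
proof (cases "n = 0")
  case False
  let ?U = "univ L" and ?G = "Aut sig L"
  have wf: "wf_struct sig L" using fraisse_limit_wf[OF FL] .
  have "(\<Union>i<n. S i) \<subseteq> ?U" "finite (\<Union>i<n. S i)" using fam by auto
  then obtain B0 \<alpha> where B0: "B0 \<in> K" "ramsey_prop sig K B0 d" and \<alpha>: "\<alpha> \<in> emb sig B0 L"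
    and cover: "(\<Union>i<n. S i) \<subseteq> \<alpha> ` univ B0"
    using cofinal_ramsey_copy[OF FC FL cof] by blast
  have wfB0: "wf_struct sig B0" "finite (univ B0)" using fraisse_class_wf[OF FC B0(1)] by auto
  define F where "F i = (SOME F. finite F \<and> F \<subseteq> ?G \<and> (\<forall>z\<in>topspace X. \<exists>g\<in>F. act g z \<in> W i))" for i
  have F: "finite (F i) \<and> F i \<subseteq> ?G \<and> (\<forall>z\<in>topspace X. \<exists>g\<in>F i. act g z \<in> W i)" if "i < n" for i
    unfolding F_def using someI_ex[OF fam[OF that, unfolded syndetic_def, THEN conjunct2, THEN conjunct2]] .
  \<comment> \<open>B = L|T collects the preimages of alpha under all g in the sets F i.\<close>
  let ?Q = "\<Union>i<n. \<Union>g\<in>F i. (\<lambda>t. perm_inv ?U g (\<alpha> t)) ` univ B0"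
  have "perm_inv ?U g (\<alpha> t) \<in> ?U" if "i < n" "g \<in> F i" "t \<in> univ B0" for i g t
    using F[OF that(1)] that(2) perm_inv_maps[of g sig L] emb_into[OF \<alpha> that(3)] by blast
  then have "?Q \<subseteq> ?U" by blast
  moreover have "finite ?Q" using F wfB0(2) by auto
  ultimately obtain T where T: "?Q \<subseteq> T" "finite T" "closed_in_struct sig L T"
    using fraisse_limit_locally_finite[OF FL] by blast
  let ?B = "substruct L T"
  have "?B \<in> K" using closed_substruct_in_class[OF FL T(3,2)] .
  moreover have "(2::nat) \<le> Suc n" using False by simp
  ultimately obtain C where C: "C \<in> K" "arrows sig C ?B B0 (Suc n) d"
    using B0(2) unfolding ramsey_prop_def by blast
  obtain c where c: "c \<in> emb sig C L" using fraisse_limit_emb[OF FC FL C(1)] .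
  show ?thesis
  proof (rule arrows_colour_classes[OF wfB0(1) substruct_wf[OF T(3)] c C(2),
        where P = "\<lambda>i. colour_class sig L act y (univ B0) \<alpha> (W i)"])
    fix i j \<beta> assume ij: "i < n" "j < n" and \<beta>: "\<beta> ` univ B0 \<subseteq> ?U"
      and ci: "colour_class sig L act y (univ B0) \<alpha> (W i) \<beta>"
      and cj: "colour_class sig L act y (univ B0) \<alpha> (W j) \<beta>"
    show "i = j"
    proof (rule ccontr)
      assume "i \<noteq> j"
      moreover have "S i \<subseteq> \<alpha> ` univ B0" using cover ij(1) by blast
      moreover have "\<alpha> ` univ B0 \<subseteq> ?U" using emb_into[OF \<alpha>] by blast
      ultimately show False
        using colour_class_disjoint[OF wf fl y _ _ \<beta> sep[OF ij] ci cj] by blast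
    qed
  next
    fix e i assume e: "e \<in> emb sig ?B L" and i: "i < n"
    have "\<And>g t. g \<in> F i \<Longrightarrow> t \<in> univ B0 \<Longrightarrow> perm_inv ?U g (\<alpha> t) \<in> T" using T(1) i by blast
    then show "\<exists>a\<in>emb sig B0 ?B. colour_class sig L act y (univ B0) \<alpha> (W i) (compose (univ B0) e a)"
      using colour_class_in_copy[OF FL fl y \<alpha> wfB0(1) _ _ T(2,3) _ e] F[OF i] by blast
  qed
qed simp

theorem mainTheorem11:
  fixes sig :: "('r,'f) signature"
    and K :: "(nat,'r,'f) struct set"
    and L :: "(nat,'r,'f) struct"
    and d :: nat
    and X :: "'x topology"
    and act :: "(nat \<Rightarrow> nat) \<Rightarrow> 'x \<Rightarrow> 'x"
  assumes "fraisse_class sig K"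
    and "is_fraisse_limit sig K L"
    and "\<forall>A\<in>K. \<exists>B\<in>K. ramsey_degree sig K B \<le> enat d \<and> embeds sig A B"
    and "universal_minimal_flow (univ L) (Aut sig L) X act"
  shows "finite (topspace X) \<and> card (topspace X) \<le> d"
proof -
  have wf: "wf_struct sig L" using fraisse_limit_wf[OF assms(2)] .
  have mf: "minimal_flow (univ L) (Aut sig L) X act"
    using assms(4) unfolding universal_minimal_flow_def by blast
  then have fl: "is_flow (univ L) (Aut sig L) X act" and "topspace X \<noteq> {}"
    unfolding minimal_flow_def by blast+
  then obtain y where y: "y \<in> topspace X" by blast
  have "card Y \<le> d" if Y: "Y \<subseteq> topspace X" "finite Y" for Y
  proof -
    obtain S W where
      "\<And>i. i < card Y \<Longrightarrow> finite (S i) \<and> S i \<subseteq> univ L \<and> syndetic (Aut sig L) X act (W i)"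
      "\<And>i j. i < card Y \<Longrightarrow> j < card Y \<Longrightarrow> i \<noteq> j \<Longrightarrow> separates (Aut sig L) act (S i) (W i) (W j)"
      using minimal_flow_separated_family[OF mf wf Y(2,1)] by blast
    from separated_family_bound[OF assms(1-3) fl y this] show ?thesis .
  qed
  then show ?thesis by (rule finite_if_finite_subsets_card_bdd)
qed

end
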